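(* Let $G=K(n_1,\dots,n_s)$ be a complete $s$-partite graph ($s\ge 2$) with parts $V_1,\dots,V_s$, $|V_j|=n_j$, $n_1\ge n_2\ge\cdots\ge n_s$, such that $3\le n_1\le 5$ and $n_2=2$. Then there is an optimal $3$-relaxed coloring of $G$ which assigns the same color to three vertices of $V_1$ and both vertices of $V_2$.
   Context: A map $f$ from $V(G)$ to a finite set of colors is a $3$-relaxed coloring if every vertex $u$ has at most $3$ neighbors $v$ with $f(v)=f(u)$; it is optimal if it uses the minimum possible number $\chi_3(G)$ of colors. *)

theory Defs
  imports Main
begin

definition relaxed_coloring :: "nat \<Rightarrow> 'a set \<Rightarrow> ('a \<Rightarrow> 'a \<Rightarrow> bool) \<Rightarrow> ('a \<Rightarrow> nat) \<Rightarrow> bool" where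
  "relaxed_coloring d V adj f \<longleftrightarrow>
     (\<forall>u\<in>V. card {v\<in>V. adj u v \<and> f v = f u} \<le> d)"

definition relaxed_chromatic :: "nat \<Rightarrow> 'a set \<Rightarrow> ('a \<Rightarrow> 'a \<Rightarrow> bool) \<Rightarrow> nat" where
  "relaxed_chromatic d V adj = (LEAST k. \<exists>f. relaxed_coloring d V adj f \<and> card (f ` V) = k)"

definition optimal_relaxed_coloring :: "nat \<Rightarrow> 'a set \<Rightarrow> ('a \<Rightarrow> 'a \<Rightarrow> bool) \<Rightarrow> ('a \<Rightarrow> nat) \<Rightarrow> bool" where
  "optimal_relaxed_coloring d V adj f \<longleftrightarrow>
     relaxed_coloring d V adj f \<and> card (f ` V) = relaxed_chromatic d V adj"

text \<open>Complete multipartite graph K(n 1, ..., n s): vertex (j, i) is the i-th vertex of part V_j,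
  for 1 <= j <= s and i < n j; two vertices are adjacent iff they lie in different parts.\<close>

definition cmp_vertices :: "nat \<Rightarrow> (nat \<Rightarrow> nat) \<Rightarrow> (nat \<times> nat) set" where
  "cmp_vertices s n = {(j, i). 1 \<le> j \<and> j \<le> s \<and> i < n j}"

definition cmp_part :: "(nat \<Rightarrow> nat) \<Rightarrow> nat \<Rightarrow> (nat \<times> nat) set" where
  "cmp_part n j = {(j, i) | i. i < n j}"

definition cmp_adj :: "nat \<times> nat \<Rightarrow> nat \<times> nat \<Rightarrow> bool" where
  "cmp_adj u v \<longleftrightarrow> fst u \<noteq> fst v"

end

theory Submission
  imports Defs
begin

text \<open>In a 3-relaxed colouring of a complete multipartite graph a vertex shares its colour with
  at most three vertices outside its own part, so a colour class has at most three vertices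
  more than its largest intersection with a part. When every part other than \<open>V\<^sub>1\<close> has at
  most two vertices, classes therefore have at most five vertices, and a class of five meets
  \<open>V\<^sub>1\<close> in at least three (otherwise it meets every part it touches in exactly two vertices
  and has even size). As \<open>|V\<^sub>1| \<le> 5\<close>, at most one class has five vertices, so
  \<open>|V| \<le> 4 \<chi>\<^sub>3 + 1\<close>. Conversely, one class consisting of three vertices of \<open>V\<^sub>1\<close> and
  both vertices of \<open>V\<^sub>2\<close>, followed by blocks of four for the remaining vertices, uses only
  \<open>\<lceil>(|V| - 1) / 4\<rceil>\<close> colours.\<close>

lemma card_eq_sum_card_fibers:
  assumes "finite S"
  shows "card S = (\<Sum>y\<in>g ` S. card {x\<in>S. g x = y})"
  using sum.image_gen[OF assms, of "\<lambda>_. (1::nat)" g] by simp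

lemma relaxed_coloring_comp_inj:
  assumes "relaxed_coloring d V adj f" "inj \<phi>"
  shows "relaxed_coloring d V adj (\<phi> \<circ> f)"
  using assms by (simp add: relaxed_coloring_def inj_eq)

lemma relaxed_coloring_const_iff:
  "relaxed_coloring d V adj (\<lambda>_. c) \<longleftrightarrow> (\<forall>u\<in>V. card {v\<in>V. adj u v} \<le> d)"
  by (simp add: relaxed_coloring_def)

lemma relaxed_coloring_Un:
  assumes f: "relaxed_coloring d V adj f" and g: "relaxed_coloring d W adj g"
    and "V \<inter> W = {}" and disjoint: "f ` V \<inter> g ` W = {}"
  shows "relaxed_coloring d (V \<union> W) adj (\<lambda>v. if v \<in> V then f v else g v)"
  unfolding relaxed_coloring_def
proof
  fix u assume "u \<in> V \<union> W"
  let ?h = "\<lambda>v. if v \<in> V then f v else g v"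
  show "card {v \<in> V \<union> W. adj u v \<and> ?h v = ?h u} \<le> d"
  proof (cases "u \<in> V")
    case True
    then have "{v \<in> V \<union> W. adj u v \<and> ?h v = ?h u} = {v\<in>V. adj u v \<and> f v = f u}"
      using disjoint by auto
    with True f show ?thesis by (simp add: relaxed_coloring_def)
  next
    case False
    with \<open>u \<in> V \<union> W\<close> have "u \<in> W" by simp
    moreover have "f v \<noteq> g u" if "v \<in> V" for v
      using disjoint that \<open>u \<in> W\<close> by blast
    ultimately have "{v \<in> V \<union> W. adj u v \<and> ?h v = ?h u} = {v\<in>W. adj u v \<and> g v = g u}"
      using False \<open>V \<inter> W = {}\<close> by auto
    with \<open>u \<in> W\<close> g show ?thesis by (simp add: relaxed_coloring_def)
  qed
qed

lemma relaxed_coloring_blocks: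
  assumes "finite V" and irrefl: "\<And>u. \<not> adj u u"
  obtains f where "relaxed_coloring d V adj f" "f ` V \<subseteq> {..<(card V + d) div Suc d}"
proof -
  obtain b where b: "bij_betw b V {..<card V}"
    using ex_bij_betw_finite_nat[OF \<open>finite V\<close>] atLeast0LessThan by auto
  define f where "f v = b v div Suc d" for v
  have "card {v\<in>V. adj u v \<and> f v = f u} \<le> d" if "u \<in> V" for u
  proof -
    let ?block = "{v\<in>V. f v = f u}"
    have "Suc d * f u \<le> b v \<and> b v < Suc d * f u + Suc d" if "f v = f u" for v
    proof -
      have "Suc d * f u + b v mod Suc d = b v"
        using that mult_div_mod_eq[of "Suc d" "b v"] by (simp only: f_def)
      then show ?thesis using mod_less_divisor[of "Suc d" "b v"] by linarith
    qed
    then have "card ?block \<le> card {Suc d * f u..<Suc d * f u + Suc d}"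
      using b by (intro card_inj_on_le[of b]) (auto simp: bij_betw_def intro: inj_on_subset)
    then have "card ?block \<le> Suc d" by simp
    have "card {v\<in>V. adj u v \<and> f v = f u} \<le> card (?block - {u})"
      using irrefl \<open>finite V\<close> by (intro card_mono) auto
    also have "\<dots> = card ?block - 1"
      using that \<open>finite V\<close> by (simp add: card_Diff_singleton)
    finally show ?thesis using \<open>card ?block \<le> Suc d\<close> by linarith
  qed
  moreover have "f ` V \<subseteq> {..<(card V + d) div Suc d}"
  proof
    fix c assume "c \<in> f ` V"
    then obtain v where "v \<in> V" "c = b v div Suc d" by (auto simp: f_def)
    moreover from \<open>v \<in> V\<close> b have "b v < card V" using bij_betw_apply by fastforce
    then have "b v + Suc d \<le> card V + d" by simp
    then have "(b v + Suc d) div Suc d \<le> (card V + d) div Suc d" by (rule div_le_mono)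
    moreover have "(b v + Suc d) div Suc d = Suc (b v div Suc d)"
      using div_add_self2[of "Suc d" "b v"] by simp
    ultimately show "c \<in> {..<(card V + d) div Suc d}" by simp
  qed
  ultimately show thesis by (intro that) (auto simp: relaxed_coloring_def)
qed

lemma relaxed_coloring_class_and_blocks:
  assumes "finite V" "W \<subseteq> V" and irrefl: "\<And>u. \<not> adj u u"
    and sparse: "\<And>u. u \<in> W \<Longrightarrow> card {v\<in>W. adj u v} \<le> d"
  obtains f where "relaxed_coloring d V adj f" "\<And>w. w \<in> W \<Longrightarrow> f w = 0"
    "card (f ` V) \<le> Suc ((card V - card W + d) div Suc d)"
proof -
  obtain g where g: "relaxed_coloring d (V - W) adj g"
    "g ` (V - W) \<subseteq> {..<(card (V - W) + d) div Suc d}"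
    using relaxed_coloring_blocks[of "V - W" adj d] \<open>finite V\<close> irrefl by blast
  define f where "f v = (if v \<in> W then 0 else Suc (g v))" for v
  have "relaxed_coloring d (W \<union> (V - W)) adj f"
    unfolding f_def
  proof (rule relaxed_coloring_Un)
    show "relaxed_coloring d W adj (\<lambda>_. 0)"
      using sparse by (simp add: relaxed_coloring_const_iff)
    show "relaxed_coloring d (V - W) adj (\<lambda>v. Suc (g v))"
      using relaxed_coloring_comp_inj[OF g(1), of Suc] by (simp add: o_def)
  qed auto
  moreover have "W \<union> (V - W) = V" using \<open>W \<subseteq> V\<close> by blast
  moreover have "card (f ` V) \<le> Suc (card (g ` (V - W)))"
  proof -
    have "f ` V \<subseteq> insert 0 (Suc ` g ` (V - W))" by (auto simp: f_def)
    then have "card (f ` V) \<le> card (insert 0 (Suc ` g ` (V - W)))"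
      using \<open>finite V\<close> by (intro card_mono) auto
    also have "\<dots> \<le> Suc (card (Suc ` g ` (V - W)))"
      using \<open>finite V\<close> by (simp add: card_insert_if)
    also have "\<dots> = Suc (card (g ` (V - W)))"
      by (simp add: card_image)
    finally show ?thesis .
  qed
  moreover have "card (g ` (V - W)) \<le> (card V - card W + d) div Suc d"
    using card_mono[OF _ g(2)] card_Diff_subset[OF finite_subset[OF assms(2,1)] assms(2)] by simp
  ultimately show thesis using that[of f] by (auto simp: f_def)
qed

lemma optimal_relaxed_coloringI:
  assumes "relaxed_coloring d V adj f"
    and "\<And>g. relaxed_coloring d V adj g \<Longrightarrow> card (f ` V) \<le> card (g ` V)"
  shows "optimal_relaxed_coloring d V adj f"
  unfolding optimal_relaxed_coloring_def relaxed_chromatic_def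
  using assms by (auto intro!: Least_equality[symmetric])

lemma finite_cmp_vertices: "finite (cmp_vertices s n)"
proof -
  have "cmp_vertices s n = (\<Union>j\<in>{1..s}. Pair j ` {..<n j})"
    by (auto simp: cmp_vertices_def)
  then show ?thesis by simp
qed

lemma cmp_part_eq_image: "cmp_part n j = Pair j ` {..<n j}"
  by (auto simp: cmp_part_def)

lemma card_cmp_part: "card (cmp_part n j) = n j"
  by (simp add: cmp_part_eq_image card_image inj_on_def)

lemma cmp_vertices_fst_eq:
  "{v \<in> cmp_vertices s n. fst v = j} = (if 1 \<le> j \<and> j \<le> s then cmp_part n j else {})"
  by (auto simp: cmp_vertices_def cmp_part_def)

lemma card_color_class_le_in_part:
  assumes "relaxed_coloring d V cmp_adj g" "u \<in> V"
  shows "card {v\<in>V. g v = g u} \<le> card {v\<in>V. g v = g u \<and> fst v = fst u} + d"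
proof -
  have split: "{v\<in>V. g v = g u} =
      {v\<in>V. g v = g u \<and> fst v = fst u} \<union> {v\<in>V. cmp_adj u v \<and> g v = g u}"
    by (auto simp: cmp_adj_def)
  have "card {v\<in>V. g v = g u} \<le>
      card {v\<in>V. g v = g u \<and> fst v = fst u} + card {v\<in>V. cmp_adj u v \<and> g v = g u}"
    unfolding split by (rule card_Un_le)
  with assms show ?thesis by (auto simp: relaxed_coloring_def)
qed

context
  fixes V :: "(nat \<times> nat) set" and g :: "nat \<times> nat \<Rightarrow> nat"
  assumes finite_V: "finite V"
    and big_part: "card {v\<in>V. fst v = 1} \<le> 5"
    and small_parts: "\<And>j. j \<noteq> 1 \<Longrightarrow> card {v\<in>V. fst v = j} \<le> 2"
    and coloring: "relaxed_coloring 3 V cmp_adj g"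
begin

lemma card_color_class_in_part_le: "card {v\<in>V. g v = c \<and> fst v = j} \<le> card {v\<in>V. fst v = j}"
  using finite_V by (intro card_mono) auto

lemma card_color_class_le_5: "card {v\<in>V. g v = c} \<le> 5"
proof (cases "\<exists>u\<in>V. g u = c \<and> fst u \<noteq> 1")
  case True
  then obtain u where u: "u \<in> V" "g u = c" "fst u \<noteq> 1" by blast
  have "card {v\<in>V. g v = c \<and> fst v = fst u} \<le> 2"
    using card_color_class_in_part_le[of c "fst u"] small_parts[OF u(3)] by simp
  with card_color_class_le_in_part[OF coloring u(1)] u(2) show ?thesis by simp
next
  case False
  then have "{v\<in>V. g v = c} = {v\<in>V. g v = c \<and> fst v = 1}" by auto
  then show ?thesis using card_color_class_in_part_le[of c 1] big_part by simp
qed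

lemma card_color_class_5_in_part_1:
  assumes five: "card {v\<in>V. g v = c} = 5"
  shows "3 \<le> card {v\<in>V. g v = c \<and> fst v = 1}"
proof (rule ccontr)
  assume few: "\<not> ?thesis"
  define S where "S = {v\<in>V. g v = c}"
  have two: "card {v\<in>S. fst v = j} = 2" if "j \<in> fst ` S" for j
  proof -
    from that obtain u where "u \<in> S" "fst u = j" by blast
    then have u: "u \<in> V" "g u = c" "fst u = j" by (simp_all add: S_def)
    have "{v\<in>S. fst v = j} = {v\<in>V. g v = c \<and> fst v = j}" by (auto simp: S_def)
    moreover have "5 \<le> card {v\<in>V. g v = c \<and> fst v = j} + 3"
      using card_color_class_le_in_part[OF coloring u(1)] u five by simp
    moreover have "card {v\<in>V. g v = c \<and> fst v = j} \<le> 2"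
      using few card_color_class_in_part_le[of c j] small_parts[of j]
      by (cases "j = 1") auto
    ultimately show ?thesis by simp
  qed
  have "card S = (\<Sum>j\<in>fst ` S. card {v\<in>S. fst v = j})"
    using finite_V by (intro card_eq_sum_card_fibers) (simp add: S_def)
  also have "\<dots> = 2 * card (fst ` S)" by (simp add: two)
  finally have "even (card S)" by simp
  then show False using five by (simp add: S_def)
qed

lemma card_color_classes_5_le_1: "card {c \<in> g ` V. card {v\<in>V. g v = c} = 5} \<le> 1"
proof -
  define C5 where "C5 = {c \<in> g ` V. card {v\<in>V. g v = c} = 5}"
  have "finite C5" using finite_V by (simp add: C5_def)
  have "card C5 * 3 \<le> (\<Sum>c\<in>C5. card {v\<in>V. g v = c \<and> fst v = 1})"
    using sum_bounded_below[of C5 "3::nat"] card_color_class_5_in_part_1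
    by (simp add: C5_def)
  also have "\<dots> = card (\<Union>c\<in>C5. {v\<in>V. g v = c \<and> fst v = 1})"
    using \<open>finite C5\<close> finite_V by (intro card_UN_disjoint[symmetric]) auto
  also have "\<dots> \<le> card {v\<in>V. fst v = 1}"
    using finite_V by (intro card_mono) auto
  finally show ?thesis using big_part by (simp add: C5_def)
qed

lemma card_le_4_mul_card_colors_plus_1: "card V \<le> 4 * card (g ` V) + 1"
proof -
  define C5 where "C5 = {c \<in> g ` V. card {v\<in>V. g v = c} = 5}"
  have "card V = (\<Sum>c\<in>g ` V. card {v\<in>V. g v = c})"
    using finite_V by (rule card_eq_sum_card_fibers)
  also have "\<dots> \<le> (\<Sum>c\<in>g ` V. 4 + of_bool (card {v\<in>V. g v = c} = 5))"
  proof (intro sum_mono)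
    fix c
    show "card {v\<in>V. g v = c} \<le> 4 + of_bool (card {v\<in>V. g v = c} = 5)"
      using card_color_class_le_5[of c] by auto
  qed
  also have "\<dots> = 4 * card (g ` V) + card C5"
    using finite_V by (simp add: sum.distrib C5_def Int_def)
  finally show ?thesis
    using card_color_classes_5_le_1 by (simp add: C5_def)
qed

end

lemma cmp_card_le_4_mul_card_colors_plus_1:
  assumes mono: "\<forall>j k. 1 \<le> j \<and> j \<le> k \<and> k \<le> s \<longrightarrow> n k \<le> n j"
    and "n 1 \<le> 5" "n 2 = 2" and coloring: "relaxed_coloring 3 (cmp_vertices s n) cmp_adj g"
  shows "card (cmp_vertices s n) \<le> 4 * card (g ` cmp_vertices s n) + 1"
proof (rule card_le_4_mul_card_colors_plus_1[OF finite_cmp_vertices _ _ coloring])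
  show "card {v \<in> cmp_vertices s n. fst v = 1} \<le> 5"
    using \<open>n 1 \<le> 5\<close> by (simp add: cmp_vertices_fst_eq card_cmp_part)
  show "card {v \<in> cmp_vertices s n. fst v = j} \<le> 2" if "j \<noteq> 1" for j
    using mono[rule_format, of 2 j] \<open>n 2 = 2\<close> that
    by (auto simp: cmp_vertices_fst_eq card_cmp_part)
qed

lemma cmp_relaxed_coloring_card_colors_le:
  assumes "2 \<le> s" "3 \<le> n 1" "n 2 = 2"
  obtains f where "relaxed_coloring 3 (cmp_vertices s n) cmp_adj f"
    "\<And>i. i < 3 \<Longrightarrow> f (1, i) = 0" "\<And>v. v \<in> cmp_part n 2 \<Longrightarrow> f v = 0"
    "card (f ` cmp_vertices s n) \<le> (card (cmp_vertices s n) + 2) div 4"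
proof -
  define V where "V = cmp_vertices s n"
  define W :: "(nat \<times> nat) set" where "W = {(1, 0), (1, 1), (1, 2), (2, 0), (2, 1)}"
  have "finite V" unfolding V_def by (rule finite_cmp_vertices)
  have "W \<subseteq> V" using assms by (auto simp: W_def V_def cmp_vertices_def)
  have irrefl: "\<And>u. \<not> cmp_adj u u" by (simp add: cmp_adj_def)
  have sparse: "card {v\<in>W. cmp_adj u v} \<le> 3" if "u \<in> W" for u
  proof -
    let ?other = "if fst u = 1 then {(2, 0), (2, 1)} else {(1, 0), (1, 1), (1, 2)} :: (nat \<times> nat) set"
    have "{v\<in>W. cmp_adj u v} \<subseteq> ?other"
      using that by (auto simp: W_def cmp_adj_def)
    then have "card {v\<in>W. cmp_adj u v} \<le> card ?other"
      by (intro card_mono) simp_all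
    also have "\<dots> \<le> 3" by simp
    finally show ?thesis .
  qed
  obtain f where f: "relaxed_coloring 3 V cmp_adj f" "\<And>w. w \<in> W \<Longrightarrow> f w = 0"
      "card (f ` V) \<le> Suc ((card V - card W + 3) div 4)"
    by (rule relaxed_coloring_class_and_blocks[OF \<open>finite V\<close> \<open>W \<subseteq> V\<close> irrefl sparse])
      (simp_all add: that)
  have "card W = 5" by (simp add: W_def)
  moreover have "card W \<le> card V" using \<open>finite V\<close> \<open>W \<subseteq> V\<close> by (rule card_mono)
  ultimately have "card (f ` V) \<le> (card V + 2) div 4"
    using f(3) by linarith
  moreover have "cmp_part n 2 \<subseteq> W"
    using \<open>n 2 = 2\<close> by (auto simp: cmp_part_def W_def)
  moreover have "(1, i) \<in> W" if "i < 3" for i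
    using that by (auto simp: W_def eval_nat_numeral less_Suc_eq)
  ultimately show thesis
    using that f(1,2) unfolding V_def by blast
qed

theorem lemma5p4:
  fixes s :: nat and n :: "nat \<Rightarrow> nat"
  assumes "s \<ge> 2"
    and "\<forall>j. 1 \<le> j \<and> j \<le> s \<longrightarrow> n j \<ge> 1"
    and "\<forall>j k. 1 \<le> j \<and> j \<le> k \<and> k \<le> s \<longrightarrow> n k \<le> n j"
    and "3 \<le> n 1" and "n 1 \<le> 5" and "n 2 = 2"
  shows "\<exists>f. optimal_relaxed_coloring 3 (cmp_vertices s n) cmp_adj f \<and>
           (\<exists>a b c. a \<in> cmp_part n 1 \<and> b \<in> cmp_part n 1 \<and> c \<in> cmp_part n 1 \<and>
              a \<noteq> b \<and> a \<noteq> c \<and> b \<noteq> c \<and>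
              f a = f b \<and> f b = f c \<and> (\<forall>v\<in>cmp_part n 2. f v = f a))"
proof -
  obtain f where f: "relaxed_coloring 3 (cmp_vertices s n) cmp_adj f"
      "\<And>i. i < 3 \<Longrightarrow> f (1, i) = 0" "\<And>v. v \<in> cmp_part n 2 \<Longrightarrow> f v = 0"
      "card (f ` cmp_vertices s n) \<le> (card (cmp_vertices s n) + 2) div 4"
    using cmp_relaxed_coloring_card_colors_le assms(1,4,6) by blast
  have "optimal_relaxed_coloring 3 (cmp_vertices s n) cmp_adj f"
  proof (rule optimal_relaxed_coloringI[OF f(1)])
    fix g assume "relaxed_coloring 3 (cmp_vertices s n) cmp_adj g"
    with assms(3,5,6) have "card (cmp_vertices s n) \<le> 4 * card (g ` cmp_vertices s n) + 1"
      by (rule cmp_card_le_4_mul_card_colors_plus_1)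
    with f(4) show "card (f ` cmp_vertices s n) \<le> card (g ` cmp_vertices s n)" by linarith
  qed
  moreover have "(1, i) \<in> cmp_part n 1" if "i < 3" for i
    using assms(4) that by (simp add: cmp_part_def)
  ultimately show ?thesis
    using f(2,3) by (intro exI[of _ f] conjI exI[of _ "(1::nat, 0::nat)"]
      exI[of _ "(1::nat, 1::nat)"] exI[of _ "(1::nat, 2::nat)"]) simp_all
qed

end
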